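(* $\mathcal{G}\subseteq\mathcal{F}$; that is, every function in $\mathcal{G}$ is strictly definable in the simply typed $\lambda$-calculus with $\beta\eta$-conversion.
   Context: We work in the simply typed $\lambda$-calculus (type assignment to untyped $\lambda$-terms) with a single base type $o$. For a type $\tau$, $\omega_\tau=(\tau\to\tau)\to\tau\to\tau$. The Church numeral of $n$ is $\rho(n)=\lambda f x.f^{n}x$. A function $f:\mathbb{N}^k\to\mathbb{N}$ is strictly definable if there exist a type $\tau$ and a term $E$ with $\vdash E:\omega_\tau\to\cdots\to\omega_\tau\to\omega_\tau$ ($k$ arguments) such that $E\,\rho(n_1)\cdots\rho(n_k)=_{\beta\eta}\rho(f(n_1,\dots,n_k))$ for all $n_1,\dots,n_k\in\mathbb{N}$. $\mathcal{F}$ denotes the class of all strictly definable functions. Extended polynomials: the smallest class of functions over $\mathbb{N}$ containing the constants $0$ and $1$, projections, addition, multiplication and $\mathrm{ifzero}(n,m,p)=(\text{if } n=0 \text{ then } m \text{ else } p)$, closed under composition. $\mathcal{G}$ is the smallest class of functions over $\mathbb{N}$ that is closed under composition and contains: all extended polynomials; for every $l\geq 2$ the function $f_1^{l}(m,n_1,\dots,n_l)=n_i$ where $i=(m\bmod l)+1$; and for every $l\geq 1$ the function $f_2^{l}(m,n_1,n_2)=(\text{if } m\leq l \text{ then } n_1 \text{ else } n_2)$. *)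

theory Defs
  imports Main
begin

datatype ty = O | Arr ty ty

definition omega :: "ty \<Rightarrow> ty" where
  "omega \<tau> = Arr (Arr \<tau> \<tau>) (Arr \<tau> \<tau>)"

definition num_fun_ty :: "nat \<Rightarrow> ty \<Rightarrow> ty" where
  "num_fun_ty k \<tau> = ((Arr (omega \<tau>)) ^^ k) (omega \<tau>)"

datatype tm = Var nat | App tm tm | Lam tm

fun lift :: "tm \<Rightarrow> nat \<Rightarrow> tm" where
  "lift (Var i) k = (if i < k then Var i else Var (Suc i))"
| "lift (App s t) k = App (lift s k) (lift t k)"
| "lift (Lam s) k = Lam (lift s (Suc k))"

fun subst :: "tm \<Rightarrow> tm \<Rightarrow> nat \<Rightarrow> tm" where
  "subst (Var i) s k = (if k < i then Var (i - 1) else if i = k then s else Var i)"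
| "subst (App t u) s k = App (subst t s k) (subst u s k)"
| "subst (Lam t) s k = Lam (subst t (lift s 0) (Suc k))"

inductive bestep :: "tm \<Rightarrow> tm \<Rightarrow> bool" where
  beta: "bestep (App (Lam s) t) (subst s t 0)"
| eta: "bestep (Lam (App (lift s 0) (Var 0))) s"
| appL: "bestep s s' \<Longrightarrow> bestep (App s t) (App s' t)"
| appR: "bestep t t' \<Longrightarrow> bestep (App s t) (App s t')"
| abs: "bestep s s' \<Longrightarrow> bestep (Lam s) (Lam s')"

definition beta_eta_eq :: "tm \<Rightarrow> tm \<Rightarrow> bool" where
  "beta_eta_eq = (sup bestep (conversep bestep))\<^sup>*\<^sup>*"

inductive typing :: "ty list \<Rightarrow> tm \<Rightarrow> ty \<Rightarrow> bool" where
  var: "i < length \<Gamma> \<Longrightarrow> \<Gamma> ! i = \<tau> \<Longrightarrow> typing \<Gamma> (Var i) \<tau>"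
| app: "typing \<Gamma> s (Arr \<sigma> \<tau>) \<Longrightarrow> typing \<Gamma> t \<sigma> \<Longrightarrow> typing \<Gamma> (App s t) \<tau>"
| lam: "typing (\<sigma> # \<Gamma>) t \<tau> \<Longrightarrow> typing \<Gamma> (Lam t) (Arr \<sigma> \<tau>)"

definition church :: "nat \<Rightarrow> tm" where
  "church n = Lam (Lam (((App (Var 1)) ^^ n) (Var 0)))"

definition apps :: "tm \<Rightarrow> tm list \<Rightarrow> tm" where
  "apps E ts = foldl App E ts"

text \<open>A k-ary function is represented as f :: nat list => nat, only its values on
  lists of length k matter.\<close>
definition strictly_definable :: "nat \<Rightarrow> (nat list \<Rightarrow> nat) \<Rightarrow> bool" where
  "strictly_definable k f \<longleftrightarrow>
     (\<exists>\<tau> E. typing [] E (num_fun_ty k \<tau>) \<and>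
        (\<forall>ns. length ns = k \<longrightarrow> beta_eta_eq (apps E (map church ns)) (church (f ns))))"

inductive_set ext_poly :: "(nat \<times> (nat list \<Rightarrow> nat)) set" where
  zero: "(k, \<lambda>_. 0) \<in> ext_poly"
| one: "(k, \<lambda>_. 1) \<in> ext_poly"
| proj: "i < k \<Longrightarrow> (k, \<lambda>ns. ns ! i) \<in> ext_poly"
| add: "(2, \<lambda>ns. ns ! 0 + ns ! 1) \<in> ext_poly"
| mult: "(2, \<lambda>ns. ns ! 0 * ns ! 1) \<in> ext_poly"
| ifzero: "(3, \<lambda>ns. if ns ! 0 = 0 then ns ! 1 else ns ! 2) \<in> ext_poly"
| comp: "(length hs, g) \<in> ext_poly \<Longrightarrow> (\<forall>h \<in> set hs. (k, h) \<in> ext_poly) \<Longrightarrow>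
         (k, \<lambda>ns. g (map (\<lambda>h. h ns) hs)) \<in> ext_poly"
| ext: "(k, f) \<in> ext_poly \<Longrightarrow> (\<forall>ns. length ns = k \<longrightarrow> g ns = f ns) \<Longrightarrow> (k, g) \<in> ext_poly"

inductive_set classG :: "(nat \<times> (nat list \<Rightarrow> nat)) set" where
  poly: "(k, f) \<in> ext_poly \<Longrightarrow> (k, f) \<in> classG"
| f1: "2 \<le> l \<Longrightarrow> (Suc l, \<lambda>ns. ns ! (ns ! 0 mod l + 1)) \<in> classG"
| f2: "1 \<le> l \<Longrightarrow> (3, \<lambda>ns. if ns ! 0 \<le> l then ns ! 1 else ns ! 2) \<in> classG"
| comp: "(length hs, g) \<in> classG \<Longrightarrow> (\<forall>h \<in> set hs. (k, h) \<in> classG) \<Longrightarrow>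
         (k, \<lambda>ns. g (map (\<lambda>h. h ns) hs)) \<in> classG"
| ext: "(k, f) \<in> classG \<Longrightarrow> (\<forall>ns. length ns = k \<longrightarrow> g ns = f ns) \<Longrightarrow> (k, g) \<in> classG"

end

theory Submission
  imports Defs
begin

text \<open>
  Extended polynomials are definable at every type \<open>\<tau>\<close>: constants, projections, addition,
  multiplication and \<open>ifzero\<close> by the usual combinators on Church numerals, and definability
  at a fixed \<open>\<tau>\<close> is closed under composition.

  The functions \<open>f\<^sub>1\<^sup>l\<close> and \<open>f\<^sub>2\<^sup>l\<close> are instead defined at \<open>\<tau> = o\<^sup>n \<rightarrow> o\<close> for large \<open>n\<close>.
  The \<open>n\<close> projections \<open>\<lambda>x\<^sub>0 \<dots> x\<^sub>n\<^sub>-\<^sub>1. x\<^sub>j\<close> are distinct closed terms of type \<open>\<tau>\<close> and serve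
  as the states of a finite automaton: a map \<open>s\<close> on the states is realised by a term of type
  \<open>\<tau> \<rightarrow> \<tau>\<close>, so the numeral \<open>m\<close> applied to it computes the state \<open>s\<^sup>m(0)\<close>, and a state can
  choose among \<open>n\<close> arguments of type \<open>\<tau>\<close>. As \<open>m mod l\<close> and \<open>min m (l + 1)\<close> are such orbits,
  \<open>f\<^sub>1\<^sup>l\<close> and \<open>f\<^sub>2\<^sup>l\<close> are definable at \<open>o\<^sup>n \<rightarrow> o\<close> for all \<open>n \<ge> l + 2\<close>. A function of \<open>\<G>\<close>
  involves finitely many of them, so it is definable at \<open>o\<^sup>n \<rightarrow> o\<close> for all large \<open>n\<close>.
\<close>

definition up_ren :: "(nat \<Rightarrow> nat) \<Rightarrow> nat \<Rightarrow> nat" where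
  "up_ren r i = (case i of 0 \<Rightarrow> 0 | Suc j \<Rightarrow> Suc (r j))"

fun rename :: "(nat \<Rightarrow> nat) \<Rightarrow> tm \<Rightarrow> tm" where
  "rename r (Var i) = Var (r i)"
| "rename r (App s t) = App (rename r s) (rename r t)"
| "rename r (Lam t) = Lam (rename (up_ren r) t)"

definition up_subst :: "(nat \<Rightarrow> tm) \<Rightarrow> nat \<Rightarrow> tm" where
  "up_subst \<sigma> i = (case i of 0 \<Rightarrow> Var 0 | Suc j \<Rightarrow> rename Suc (\<sigma> j))"

fun psubst :: "(nat \<Rightarrow> tm) \<Rightarrow> tm \<Rightarrow> tm" where
  "psubst \<sigma> (Var i) = \<sigma> i"
| "psubst \<sigma> (App s t) = App (psubst \<sigma> s) (psubst \<sigma> t)"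
| "psubst \<sigma> (Lam t) = Lam (psubst (up_subst \<sigma>) t)"

lemma up_ren_0 [simp]: "up_ren r 0 = 0"
  and up_ren_Suc [simp]: "up_ren r (Suc j) = Suc (r j)"
  by (simp_all add: up_ren_def)

lemma up_subst_0 [simp]: "up_subst \<sigma> 0 = Var 0"
  and up_subst_Suc [simp]: "up_subst \<sigma> (Suc j) = rename Suc (\<sigma> j)"
  by (simp_all add: up_subst_def)

lemma up_ren_comp: "up_ren r \<circ> up_ren r' = up_ren (r \<circ> r')"
  by (simp add: fun_eq_iff up_ren_def split: nat.split)

lemma rename_rename: "rename r (rename r' t) = rename (r \<circ> r') t"
  by (induction t arbitrary: r r') (simp_all add: up_ren_comp)

lemma rename_ident [simp]: "rename (\<lambda>i. i) t = t"
proof -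
  have "up_ren (\<lambda>i. i) = (\<lambda>i. i)"
    by (simp add: fun_eq_iff up_ren_def split: nat.split)
  then show ?thesis
    by (induction t) simp_all
qed

lemma up_subst_comp_up_ren: "up_subst \<sigma> \<circ> up_ren r = up_subst (\<sigma> \<circ> r)"
  by (simp add: fun_eq_iff up_ren_def split: nat.split)

lemma psubst_rename: "psubst \<sigma> (rename r t) = psubst (\<sigma> \<circ> r) t"
  by (induction t arbitrary: \<sigma> r) (simp_all add: up_subst_comp_up_ren)

lemma rename_comp_up_subst: "rename (up_ren r) \<circ> up_subst \<sigma> = up_subst (rename r \<circ> \<sigma>)"
proof -
  have Suc_shift: "up_ren r \<circ> Suc = Suc \<circ> r"
    by (simp add: fun_eq_iff up_ren_def)
  show ?thesis
    by (simp add: fun_eq_iff up_subst_def rename_rename Suc_shift split: nat.split)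
qed

lemma rename_psubst: "rename r (psubst \<sigma> t) = psubst (rename r \<circ> \<sigma>) t"
  by (induction t arbitrary: \<sigma> r) (simp_all add: rename_comp_up_subst)

lemma psubst_comp_up_subst: "psubst (up_subst \<sigma>) \<circ> up_subst \<tau> = up_subst (psubst \<sigma> \<circ> \<tau>)"
proof -
  have Suc_shift: "up_subst \<sigma> \<circ> Suc = rename Suc \<circ> \<sigma>"
    by (simp add: fun_eq_iff)
  show ?thesis
    by (simp add: fun_eq_iff up_subst_def psubst_rename rename_psubst Suc_shift split: nat.split)
qed

lemma psubst_psubst: "psubst \<sigma> (psubst \<tau> t) = psubst (psubst \<sigma> \<circ> \<tau>) t"
  by (induction t arbitrary: \<sigma> \<tau>) (simp_all add: psubst_comp_up_subst)

lemma psubst_Var [simp]: "psubst Var t = t"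
proof -
  have "up_subst Var = Var"
    by (simp add: fun_eq_iff up_subst_def split: nat.split)
  then show ?thesis
    by (induction t) simp_all
qed

lemma funpow_up_subst:
  "(up_subst ^^ k) \<sigma> i = (if i < k then Var i else rename (\<lambda>j. j + k) (\<sigma> (i - k)))"
proof (induction k arbitrary: i)
  case (Suc k)
  have "(\<lambda>j. Suc (j + k)) = Suc \<circ> (\<lambda>j. j + k)"
    by auto
  then show ?case
    using Suc.IH by (cases i) (simp_all add: rename_rename)
qed simp

lemma lift_eq_rename: "lift t k = rename (\<lambda>i. if i < k then i else Suc i) t"
proof (induction t arbitrary: k)
  case (Lam t)
  have "up_ren (\<lambda>i. if i < k then i else Suc i) = (\<lambda>i. if i < Suc k then i else Suc i)"
    by (simp add: fun_eq_iff up_ren_def split: nat.split)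
  then show ?case
    using Lam by simp
qed simp_all

definition subst_env :: "tm \<Rightarrow> nat \<Rightarrow> nat \<Rightarrow> tm" where
  "subst_env s k i = (if i < k then Var i else if i = k then s else Var (i - 1))"

lemma subst_eq_psubst: "subst t s k = psubst (subst_env s k) t"
proof (induction t arbitrary: s k)
  case (Lam t)
  have "up_subst (subst_env s k) = subst_env (lift s 0) (Suc k)"
    by (simp add: fun_eq_iff up_subst_def subst_env_def lift_eq_rename split: nat.split)
  then show ?case
    using Lam by simp
qed (simp_all add: subst_env_def)

lemma subst_env_0_comp_Suc: "subst_env s 0 \<circ> Suc = Var"
  by (simp add: fun_eq_iff subst_env_def)

fun closed_at :: "nat \<Rightarrow> tm \<Rightarrow> bool" where
  "closed_at n (Var i) \<longleftrightarrow> i < n"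
| "closed_at n (App s t) \<longleftrightarrow> closed_at n s \<and> closed_at n t"
| "closed_at n (Lam t) \<longleftrightarrow> closed_at (Suc n) t"

lemma psubst_closed_at: "closed_at n t \<Longrightarrow> \<forall>i<n. \<sigma> i = Var i \<Longrightarrow> psubst \<sigma> t = t"
proof (induction t arbitrary: n \<sigma>)
  case (Lam t)
  then have "\<forall>i<Suc n. up_subst \<sigma> i = Var i"
    by (auto simp: up_subst_def split: nat.split)
  then show ?case
    using Lam by simp
qed auto

lemma rename_closed_at: "closed_at n t \<Longrightarrow> \<forall>i<n. r i = i \<Longrightarrow> rename r t = t"
proof (induction t arbitrary: n r)
  case (Lam t)
  then have "\<forall>i<Suc n. up_ren r i = i"
    by (auto simp: up_ren_def split: nat.split)
  then show ?case
    using Lam by simp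
qed auto

lemma psubst_closed [simp]: "closed_at 0 t \<Longrightarrow> psubst \<sigma> t = t"
  and rename_closed [simp]: "closed_at 0 t \<Longrightarrow> rename r t = t"
  by (simp_all add: psubst_closed_at rename_closed_at)

notation beta_eta_eq (infix "=\<^sub>\<beta>\<^sub>\<eta>" 50)

lemma beta_eta_eq_refl [simp]: "t =\<^sub>\<beta>\<^sub>\<eta> t"
  by (simp add: beta_eta_eq_def)

lemma beta_eta_eq_trans [trans]: "s =\<^sub>\<beta>\<^sub>\<eta> t \<Longrightarrow> t =\<^sub>\<beta>\<^sub>\<eta> u \<Longrightarrow> s =\<^sub>\<beta>\<^sub>\<eta> u"
  unfolding beta_eta_eq_def by (rule rtranclp_trans)

lemma beta_eta_eq_cong:
  assumes F_step: "\<And>x y. bestep x y \<Longrightarrow> bestep (F x) (F y)" and "x =\<^sub>\<beta>\<^sub>\<eta> y"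
  shows "F x =\<^sub>\<beta>\<^sub>\<eta> F y"
  using \<open>x =\<^sub>\<beta>\<^sub>\<eta> y\<close> unfolding beta_eta_eq_def
proof (induction rule: rtranclp_induct)
  case (step y z)
  from step.hyps(2) have "(sup bestep (conversep bestep)) (F y) (F z)"
    by (auto intro: F_step)
  with step.IH show ?case
    by (rule rtranclp.rtrancl_into_rtrancl)
qed simp

lemma beta_eta_eq_App_left: "s =\<^sub>\<beta>\<^sub>\<eta> s' \<Longrightarrow> App s t =\<^sub>\<beta>\<^sub>\<eta> App s' t"
  and beta_eta_eq_App_right: "t =\<^sub>\<beta>\<^sub>\<eta> t' \<Longrightarrow> App s t =\<^sub>\<beta>\<^sub>\<eta> App s t'"
  and beta_eta_eq_Lam: "t =\<^sub>\<beta>\<^sub>\<eta> t' \<Longrightarrow> Lam t =\<^sub>\<beta>\<^sub>\<eta> Lam t'"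
  by (rule beta_eta_eq_cong; simp add: bestep.intros)+

lemma beta_eta_eq_beta: "App (Lam s) t =\<^sub>\<beta>\<^sub>\<eta> psubst (subst_env t 0) s"
  using bestep.beta[of s t] by (simp add: beta_eta_eq_def subst_eq_psubst r_into_rtranclp)

lemma beta_eta_eq_eta: "Lam (App (rename Suc s) (Var 0)) =\<^sub>\<beta>\<^sub>\<eta> s"
  using bestep.eta[of s] by (simp add: beta_eta_eq_def lift_eq_rename r_into_rtranclp)

definition lams :: "nat \<Rightarrow> tm \<Rightarrow> tm" where
  "lams k t = (Lam ^^ k) t"

text \<open>The variables bound by \<open>lams n\<close>, outermost first.\<close>
definition bound_vars :: "nat \<Rightarrow> tm list" where
  "bound_vars n = map (\<lambda>i. Var (n - 1 - i)) [0..<n]"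

text \<open>The substitution performed by applying \<open>lams (length xs)\<close> to the arguments \<open>xs\<close>.\<close>
definition args_env :: "tm list \<Rightarrow> nat \<Rightarrow> tm" where
  "args_env xs i = (if i < length xs then xs ! (length xs - 1 - i) else Var (i - length xs))"

lemma apps_Nil [simp]: "apps s [] = s"
  and apps_Cons [simp]: "apps s (x # xs) = apps (App s x) xs"
  and apps_snoc [simp]: "apps s (xs @ [x]) = App (apps s xs) x"
  by (simp_all add: apps_def)

lemma lams_0 [simp]: "lams 0 t = t"
  and lams_Suc: "lams (Suc k) t = Lam (lams k t)"
  and lams_Suc_right: "lams (Suc k) t = lams k (Lam t)"
  by (simp_all add: lams_def funpow_swap1)

lemma length_bound_vars [simp]: "length (bound_vars n) = n"
  by (simp add: bound_vars_def)

lemma bound_vars_Suc: "bound_vars (Suc n) = map (rename Suc) (bound_vars n) @ [Var 0]"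
  by (simp add: bound_vars_def Suc_diff_Suc)

lemma psubst_apps [simp]: "psubst \<sigma> (apps s xs) = apps (psubst \<sigma> s) (map (psubst \<sigma>) xs)"
  and rename_apps [simp]: "rename r (apps s xs) = apps (rename r s) (map (rename r) xs)"
  by (induction xs arbitrary: s) simp_all

lemma psubst_lams [simp]: "psubst \<sigma> (lams k t) = lams k (psubst ((up_subst ^^ k) \<sigma>) t)"
  by (induction k arbitrary: \<sigma>) (simp_all add: lams_Suc funpow_Suc_right del: funpow.simps)

lemma psubst_funpow_App: "psubst \<sigma> ((App f ^^ n) x) = (App (psubst \<sigma> f) ^^ n) (psubst \<sigma> x)"
  by (induction n) simp_all

lemma psubst_args_env_bound_vars: "map (psubst (args_env xs)) (bound_vars (length xs)) = xs"
  by (rule nth_equalityI) (auto simp: bound_vars_def args_env_def)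

lemma closed_at_lams: "closed_at (k + m) t \<Longrightarrow> closed_at m (lams k t)"
  by (induction k arbitrary: m) (simp_all add: lams_Suc)

lemma closed_at_apps: "closed_at m h \<Longrightarrow> \<forall>x\<in>set xs. closed_at m x \<Longrightarrow> closed_at m (apps h xs)"
  by (induction xs arbitrary: h) auto

lemma beta_eta_eq_apps_head: "s =\<^sub>\<beta>\<^sub>\<eta> s' \<Longrightarrow> apps s xs =\<^sub>\<beta>\<^sub>\<eta> apps s' xs"
  by (induction xs arbitrary: s s') (auto intro: beta_eta_eq_App_left)

lemma beta_eta_eq_apps_args:
  "list_all2 beta_eta_eq xs ys \<Longrightarrow> apps s xs =\<^sub>\<beta>\<^sub>\<eta> apps s ys"
proof (induction xs ys arbitrary: s rule: list_all2_induct)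
  case (Cons x xs y ys)
  have "apps (App s x) xs =\<^sub>\<beta>\<^sub>\<eta> apps (App s y) xs"
    using Cons.hyps(1) by (intro beta_eta_eq_apps_head beta_eta_eq_App_right)
  also have "apps (App s y) xs =\<^sub>\<beta>\<^sub>\<eta> apps (App s y) ys"
    by (rule Cons.IH)
  finally show ?case
    by simp
qed simp

lemma beta_eta_eq_lams: "s =\<^sub>\<beta>\<^sub>\<eta> s' \<Longrightarrow> lams k s =\<^sub>\<beta>\<^sub>\<eta> lams k s'"
  by (induction k) (simp_all add: lams_Suc beta_eta_eq_Lam)

lemma beta_eta_eq_apps_lams: "apps (lams (length xs) t) xs =\<^sub>\<beta>\<^sub>\<eta> psubst (args_env xs) t"
proof (induction xs arbitrary: t rule: rev_induct)
  case Nil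
  have "args_env [] = Var"
    by (simp add: fun_eq_iff args_env_def)
  then show ?case
    by simp
next
  case (snoc b xs)
  have env_snoc: "psubst (subst_env b 0) \<circ> up_subst (args_env xs) = args_env (xs @ [b])"
  proof
    fix i
    show "(psubst (subst_env b 0) \<circ> up_subst (args_env xs)) i = args_env (xs @ [b]) i"
      by (cases i) (auto simp: subst_env_def args_env_def psubst_rename subst_env_0_comp_Suc nth_append)
  qed
  have "apps (lams (length (xs @ [b])) t) (xs @ [b]) = App (apps (lams (length xs) (Lam t)) xs) b"
    by (simp add: lams_Suc_right)
  also have "\<dots> =\<^sub>\<beta>\<^sub>\<eta> App (Lam (psubst (up_subst (args_env xs)) t)) b"
    using snoc.IH[of "Lam t"] by (simp add: beta_eta_eq_App_left)
  also have "\<dots> =\<^sub>\<beta>\<^sub>\<eta> psubst (subst_env b 0) (psubst (up_subst (args_env xs)) t)"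
    by (rule beta_eta_eq_beta)
  also have "\<dots> = psubst (args_env (xs @ [b])) t"
    by (simp add: psubst_psubst env_snoc)
  finally show ?case .
qed

lemma beta_eta_eq_eta_lams: "lams n (apps (rename (\<lambda>i. i + n) u) (bound_vars n)) =\<^sub>\<beta>\<^sub>\<eta> u"
proof (induction n)
  case (Suc n)
  have "rename (\<lambda>i. Suc (i + n)) u = rename Suc (rename (\<lambda>i. i + n) u)"
    by (simp add: rename_rename comp_def)
  then have "lams (Suc n) (apps (rename (\<lambda>i. i + Suc n) u) (bound_vars (Suc n)))
      = lams n (Lam (App (rename Suc (apps (rename (\<lambda>i. i + n) u) (bound_vars n))) (Var 0)))"
    by (simp add: lams_Suc_right bound_vars_Suc)
  also have "\<dots> =\<^sub>\<beta>\<^sub>\<eta> lams n (apps (rename (\<lambda>i. i + n) u) (bound_vars n))"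
    by (rule beta_eta_eq_lams) (rule beta_eta_eq_eta)
  also have "\<dots> =\<^sub>\<beta>\<^sub>\<eta> u"
    by (rule Suc.IH)
  finally show ?case .
qed (simp add: bound_vars_def)

lemma typing_closed_at: "typing \<Gamma> t T \<Longrightarrow> closed_at (length \<Gamma>) t"
  by (induction rule: typing.induct) auto

lemma typing_append: "typing \<Gamma> t T \<Longrightarrow> typing (\<Gamma> @ \<Delta>) t T"
  by (induction rule: typing.induct) (auto intro: typing.intros simp: nth_append)

lemma typing_weaken_Nil: "typing [] t T \<Longrightarrow> typing \<Gamma> t T"
  using typing_append[of "[]"] by simp

lemma typing_lams: "typing (replicate k A @ \<Gamma>) t B \<Longrightarrow> typing \<Gamma> (lams k t) ((Arr A ^^ k) B)"
proof (induction k arbitrary: \<Gamma>)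
  case (Suc k)
  then have "typing (A # \<Gamma>) (lams k t) ((Arr A ^^ k) B)"
    by (simp add: replicate_app_Cons_same)
  then show ?case
    by (simp add: lams_Suc typing.lam)
qed simp

lemma typing_apps:
  "typing \<Gamma> s ((Arr A ^^ length xs) B) \<Longrightarrow> \<forall>x\<in>set xs. typing \<Gamma> x A \<Longrightarrow> typing \<Gamma> (apps s xs) B"
  by (induction xs arbitrary: s) (auto intro: typing.app)

lemma typing_bound_vars: "x \<in> set (bound_vars n) \<Longrightarrow> typing (replicate n A @ \<Gamma>) x A"
  by (auto simp: bound_vars_def nth_append intro!: typing.var)

lemma closed_church [simp]: "closed_at 0 (church n)"
proof -
  have "closed_at 2 ((App (Var 1) ^^ n) (Var 0))"
    by (induction n) simp_all
  then show ?thesis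
    by (simp add: church_def numeral_2_eq_2)
qed

lemma typing_church: "typing \<Gamma> (church n) (omega \<tau>)"
proof -
  have "typing (\<tau> # Arr \<tau> \<tau> # \<Gamma>) ((App (Var 1) ^^ n) (Var 0)) \<tau>"
    by (induction n) (auto intro!: typing.app[where \<sigma>=\<tau>] typing.var)
  then show ?thesis
    unfolding church_def omega_def by (intro typing.lam)
qed

lemma beta_eta_eq_church_App: "App (App (church n) f) x =\<^sub>\<beta>\<^sub>\<eta> (App f ^^ n) x"
proof -
  have "App (church n) f =\<^sub>\<beta>\<^sub>\<eta> psubst (subst_env f 0) (Lam ((App (Var 1) ^^ n) (Var 0)))"
    unfolding church_def by (rule beta_eta_eq_beta)
  also have "\<dots> = Lam ((App (rename Suc f) ^^ n) (Var 0))"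
    by (simp add: psubst_funpow_App subst_env_def)
  finally have "App (App (church n) f) x =\<^sub>\<beta>\<^sub>\<eta> App (Lam ((App (rename Suc f) ^^ n) (Var 0))) x"
    by (rule beta_eta_eq_App_left)
  also have "\<dots> =\<^sub>\<beta>\<^sub>\<eta> psubst (subst_env x 0) ((App (rename Suc f) ^^ n) (Var 0))"
    by (rule beta_eta_eq_beta)
  also have "\<dots> = (App f ^^ n) x"
    by (simp add: psubst_funpow_App psubst_rename subst_env_0_comp_Suc) (simp add: subst_env_def)
  finally show ?thesis .
qed

lemma beta_eta_eq_churchI: "t =\<^sub>\<beta>\<^sub>\<eta> (App (Var 1) ^^ n) (Var 0) \<Longrightarrow> Lam (Lam t) =\<^sub>\<beta>\<^sub>\<eta> church n"
  unfolding church_def by (intro beta_eta_eq_Lam)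

lemma beta_eta_eq_funpow_church_App:
  "(App (App (church b) f) ^^ a) x =\<^sub>\<beta>\<^sub>\<eta> (App f ^^ (a * b)) x"
proof (induction a)
  case (Suc a)
  have "(App (App (church b) f) ^^ Suc a) x =\<^sub>\<beta>\<^sub>\<eta> App (App (church b) f) ((App f ^^ (a * b)) x)"
    using Suc.IH by (simp add: beta_eta_eq_App_right)
  also have "\<dots> =\<^sub>\<beta>\<^sub>\<eta> (App f ^^ b) ((App f ^^ (a * b)) x)"
    by (rule beta_eta_eq_church_App)
  finally show ?case
    by (simp add: funpow_add)
qed simp

section \<open>Definability at a fixed type\<close>

definition definable_at :: "ty \<Rightarrow> nat \<Rightarrow> (nat list \<Rightarrow> nat) \<Rightarrow> bool" where
  "definable_at \<tau> k f \<longleftrightarrow> (\<exists>E. typing [] E (num_fun_ty k \<tau>) \<and>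
     (\<forall>ns. length ns = k \<longrightarrow> apps E (map church ns) =\<^sub>\<beta>\<^sub>\<eta> church (f ns)))"

lemma strictly_definable_iff: "strictly_definable k f \<longleftrightarrow> (\<exists>\<tau>. definable_at \<tau> k f)"
  unfolding strictly_definable_def definable_at_def by blast

lemma definable_at_cong:
  "definable_at \<tau> k f \<Longrightarrow> (\<And>ns. length ns = k \<Longrightarrow> g ns = f ns) \<Longrightarrow> definable_at \<tau> k g"
  unfolding definable_at_def by auto

lemma definable_atI:
  assumes "typing (replicate k (omega \<tau>)) t (omega \<tau>)"
    and "\<And>ns. length ns = k \<Longrightarrow> psubst (args_env (map church ns)) t =\<^sub>\<beta>\<^sub>\<eta> church (f ns)"
  shows "definable_at \<tau> k f"
  unfolding definable_at_def
proof (intro exI conjI allI impI)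
  show "typing [] (lams k t) (num_fun_ty k \<tau>)"
    unfolding num_fun_ty_def using typing_lams[of k "omega \<tau>" "[]"] assms(1) by simp
  fix ns :: "nat list"
  assume "length ns = k"
  then have "apps (lams k t) (map church ns) =\<^sub>\<beta>\<^sub>\<eta> psubst (args_env (map church ns)) t"
    using beta_eta_eq_apps_lams[of "map church ns"] by simp
  also have "\<dots> =\<^sub>\<beta>\<^sub>\<eta> church (f ns)"
    using \<open>length ns = k\<close> by (rule assms(2))
  finally show "apps (lams k t) (map church ns) =\<^sub>\<beta>\<^sub>\<eta> church (f ns)" .
qed

lemma definable_at_const: "definable_at \<tau> k (\<lambda>_. c)"
  by (rule definable_atI[where t = "church c"]) (simp_all add: typing_church)

lemma definable_at_nth: "i < k \<Longrightarrow> definable_at \<tau> k (\<lambda>ns. ns ! i)"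
  by (rule definable_atI[where t = "Var (k - 1 - i)"]) (auto intro!: typing.var simp: args_env_def)

lemma definable_at_add: "definable_at \<tau> 2 (\<lambda>ns. ns ! 0 + ns ! 1)"
proof -
  let ?t = "Lam (Lam (App (App (Var 3) (Var 1)) (App (App (Var 2) (Var 1)) (Var 0))))"
  show ?thesis
  proof (rule definable_atI[where t = ?t])
    show "typing (replicate 2 (omega \<tau>)) ?t (omega \<tau>)"
      unfolding omega_def
      by (intro typing.lam typing.app[where \<sigma> = \<tau>] typing.app[where \<sigma> = "Arr \<tau> \<tau>"] typing.var)
        (simp_all add: numeral_eq_Suc omega_def)
  next
    fix ns :: "nat list"
    assume "length ns = 2"
    then obtain a b where ns: "ns = [a, b]"
      by (auto simp: numeral_eq_Suc length_Suc_conv)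
    have "App (App (church a) (Var 1)) (App (App (church b) (Var 1)) (Var 0))
        =\<^sub>\<beta>\<^sub>\<eta> App (App (church a) (Var 1)) ((App (Var 1) ^^ b) (Var 0))"
      by (intro beta_eta_eq_App_right beta_eta_eq_church_App)
    also have "\<dots> =\<^sub>\<beta>\<^sub>\<eta> (App (Var 1) ^^ (a + b)) (Var 0)"
      using beta_eta_eq_church_App by (simp add: funpow_add)
    finally show "psubst (args_env (map church ns)) ?t =\<^sub>\<beta>\<^sub>\<eta> church (ns ! 0 + ns ! 1)"
      by (simp add: ns args_env_def numeral_eq_Suc beta_eta_eq_churchI)
  qed
qed

lemma definable_at_mult: "definable_at \<tau> 2 (\<lambda>ns. ns ! 0 * ns ! 1)"
proof -
  let ?t = "Lam (Lam (App (App (Var 3) (App (Var 2) (Var 1))) (Var 0)))"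
  show ?thesis
  proof (rule definable_atI[where t = ?t])
    show "typing (replicate 2 (omega \<tau>)) ?t (omega \<tau>)"
      unfolding omega_def
      by (intro typing.lam typing.app[where \<sigma> = \<tau>] typing.app[where \<sigma> = "Arr \<tau> \<tau>"] typing.var)
        (simp_all add: numeral_eq_Suc omega_def)
  next
    fix ns :: "nat list"
    assume "length ns = 2"
    then obtain a b where ns: "ns = [a, b]"
      by (auto simp: numeral_eq_Suc length_Suc_conv)
    have "App (App (church a) (App (church b) (Var 1))) (Var 0)
        =\<^sub>\<beta>\<^sub>\<eta> (App (App (church b) (Var 1)) ^^ a) (Var 0)"
      by (rule beta_eta_eq_church_App)
    also have "\<dots> =\<^sub>\<beta>\<^sub>\<eta> (App (Var 1) ^^ (a * b)) (Var 0)"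
      by (rule beta_eta_eq_funpow_church_App)
    finally show "psubst (args_env (map church ns)) ?t =\<^sub>\<beta>\<^sub>\<eta> church (ns ! 0 * ns ! 1)"
      by (simp add: ns args_env_def numeral_eq_Suc beta_eta_eq_churchI)
  qed
qed

lemma beta_eta_eq_funpow_const: "(App (Lam (rename Suc y)) ^^ a) x =\<^sub>\<beta>\<^sub>\<eta> (if a = 0 then x else y)"
proof (cases a)
  case (Suc a')
  have "App (Lam (rename Suc y)) ((App (Lam (rename Suc y)) ^^ a') x)
      =\<^sub>\<beta>\<^sub>\<eta> psubst (subst_env ((App (Lam (rename Suc y)) ^^ a') x) 0) (rename Suc y)"
    by (rule beta_eta_eq_beta)
  also have "\<dots> = y"
    by (simp add: psubst_rename subst_env_0_comp_Suc)
  finally show ?thesis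
    using Suc by simp
qed simp

lemma definable_at_ifzero: "definable_at \<tau> 3 (\<lambda>ns. if ns ! 0 = 0 then ns ! 1 else ns ! 2)"
proof -
  let ?t = "Lam (Lam (App (App (Var 4) (Lam (App (App (Var 3) (Var 2)) (Var 1))))
    (App (App (Var 3) (Var 1)) (Var 0))))"
  show ?thesis
  proof (rule definable_atI[where t = ?t])
    show "typing (replicate 3 (omega \<tau>)) ?t (omega \<tau>)"
      unfolding omega_def
      by (intro typing.lam typing.app[where \<sigma> = \<tau>] typing.app[where \<sigma> = "Arr \<tau> \<tau>"] typing.var)
        (simp_all add: numeral_eq_Suc omega_def)
  next
    fix ns :: "nat list"
    assume "length ns = 3"
    then obtain a b c where ns: "ns = [a, b, c]"
      by (auto simp: numeral_eq_Suc length_Suc_conv)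
    let ?K = "Lam (rename Suc (App (App (church c) (Var 1)) (Var 0)))"
    let ?x = "App (App (church b) (Var 1)) (Var 0)"
    have "App (App (church a) ?K) ?x =\<^sub>\<beta>\<^sub>\<eta> (App ?K ^^ a) ?x"
      by (rule beta_eta_eq_church_App)
    also have "\<dots> =\<^sub>\<beta>\<^sub>\<eta> (if a = 0 then ?x else App (App (church c) (Var 1)) (Var 0))"
      by (rule beta_eta_eq_funpow_const)
    also have "\<dots> =\<^sub>\<beta>\<^sub>\<eta> (App (Var 1) ^^ (if a = 0 then b else c)) (Var 0)"
      by (simp add: beta_eta_eq_church_App)
    finally have "Lam (Lam (App (App (church a) ?K) ?x)) =\<^sub>\<beta>\<^sub>\<eta> church (if a = 0 then b else c)"
      by (rule beta_eta_eq_churchI)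
    then show "psubst (args_env (map church ns)) ?t
        =\<^sub>\<beta>\<^sub>\<eta> church (if ns ! 0 = 0 then ns ! 1 else ns ! 2)"
      by (simp add: ns args_env_def numeral_eq_Suc cong: if_cong split del: if_split)
  qed
qed

lemma definable_at_comp:
  assumes g: "definable_at \<tau> (length hs) g" and hs: "\<forall>h\<in>set hs. definable_at \<tau> k h"
  shows "definable_at \<tau> k (\<lambda>ns. g (map (\<lambda>h. h ns) hs))"
proof -
  obtain G where G_ty: "typing [] G (num_fun_ty (length hs) \<tau>)"
    and G_eq: "\<And>ns. length ns = length hs \<Longrightarrow> apps G (map church ns) =\<^sub>\<beta>\<^sub>\<eta> church (g ns)"
    using g unfolding definable_at_def by blast
  from hs obtain H where H_ty: "\<And>h. h \<in> set hs \<Longrightarrow> typing [] (H h) (num_fun_ty k \<tau>)"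
    and H_eq: "\<And>h ns. h \<in> set hs \<Longrightarrow> length ns = k \<Longrightarrow>
      apps (H h) (map church ns) =\<^sub>\<beta>\<^sub>\<eta> church (h ns)"
    unfolding definable_at_def by metis
  let ?t = "apps G (map (\<lambda>h. apps (H h) (bound_vars k)) hs)"
  show ?thesis
  proof (rule definable_atI[where t = ?t])
    have "typing (replicate k (omega \<tau>)) (apps (H h) (bound_vars k)) (omega \<tau>)" if "h \<in> set hs" for h
      using typing_weaken_Nil[OF H_ty[OF that]] typing_bound_vars[of _ k "omega \<tau>" "[]"]
      by (intro typing_apps[where A = "omega \<tau>"]) (simp_all add: num_fun_ty_def)
    then show "typing (replicate k (omega \<tau>)) ?t (omega \<tau>)"
      using typing_weaken_Nil[OF G_ty] by (intro typing_apps[where A = "omega \<tau>"]) (auto simp: num_fun_ty_def)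
  next
    fix ns :: "nat list"
    assume len: "length ns = k"
    have "closed_at 0 G" and "\<And>h. h \<in> set hs \<Longrightarrow> closed_at 0 (H h)"
      using typing_closed_at G_ty H_ty by fastforce+
    moreover have "map (psubst (args_env (map church ns))) (bound_vars k) = map church ns"
      using psubst_args_env_bound_vars[of "map church ns"] len by simp
    ultimately have "psubst (args_env (map church ns)) ?t = apps G (map (\<lambda>h. apps (H h) (map church ns)) hs)"
      by (simp cong: map_cong)
    also have "\<dots> =\<^sub>\<beta>\<^sub>\<eta> apps G (map church (map (\<lambda>h. h ns) hs))"
      by (rule beta_eta_eq_apps_args) (auto simp: list_all2_conv_all_nth len H_eq)
    also have "\<dots> =\<^sub>\<beta>\<^sub>\<eta> church (g (map (\<lambda>h. h ns) hs))"
      by (rule G_eq) simp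
    finally show "psubst (args_env (map church ns)) ?t =\<^sub>\<beta>\<^sub>\<eta> church (g (map (\<lambda>h. h ns) hs))" .
  qed
qed

lemma ext_poly_definable_at: "(k, f) \<in> ext_poly \<Longrightarrow> definable_at \<tau> k f"
  by (induction rule: ext_poly.induct)
    (auto intro: definable_at_const definable_at_nth definable_at_add definable_at_mult
      definable_at_ifzero definable_at_comp definable_at_cong)

section \<open>Finite automata at the type \<open>o\<^sup>n \<rightarrow> o\<close>\<close>

definition proj_ty :: "nat \<Rightarrow> ty" where
  "proj_ty n = (Arr ty.O ^^ n) ty.O"

definition proj_tm :: "nat \<Rightarrow> nat \<Rightarrow> tm" where
  "proj_tm n j = lams n (Var (n - 1 - j))"

definition step_tm :: "nat \<Rightarrow> (nat \<Rightarrow> nat) \<Rightarrow> tm" where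
  "step_tm n s = Lam (lams n (apps (Var n) (map (\<lambda>i. Var (n - 1 - s i)) [0..<n])))"

text \<open>The branches have type \<open>o\<^sup>n \<rightarrow> o\<close> themselves, so they are eta-expanded before being
  passed to the state \<open>proj_tm n r\<close>, which picks the \<open>r\<close>-th one.\<close>
definition dispatch_tm :: "nat \<Rightarrow> tm" where
  "dispatch_tm n = lams (Suc n) (lams n
     (apps (Var (n + n)) (map (\<lambda>j. apps (Var (n + (n - 1 - j))) (bound_vars n)) [0..<n])))"

lemma closed_proj_tm [simp]: "j < n \<Longrightarrow> closed_at 0 (proj_tm n j)"
  unfolding proj_tm_def by (rule closed_at_lams) simp

lemma closed_step_tm [simp]: "closed_at 0 (step_tm n s)"
  unfolding step_tm_def by (simp, intro closed_at_lams closed_at_apps) auto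

lemma closed_dispatch_tm [simp]: "closed_at 0 (dispatch_tm n)"
  unfolding dispatch_tm_def
  by (intro closed_at_lams closed_at_apps) (auto intro!: closed_at_apps simp: bound_vars_def)

lemma typing_proj_tm: "j < n \<Longrightarrow> typing \<Gamma> (proj_tm n j) (proj_ty n)"
  unfolding proj_tm_def proj_ty_def
  by (rule typing_lams) (auto intro!: typing.var simp: nth_append)

lemma typing_step_tm:
  "\<forall>i<n. s i < n \<Longrightarrow> typing \<Gamma> (step_tm n s) (Arr (proj_ty n) (proj_ty n))"
  unfolding step_tm_def proj_ty_def
  by (intro typing.lam typing_lams typing_apps[where A = ty.O]) (auto intro!: typing.var simp: nth_append)

lemma typing_dispatch_tm: "typing \<Gamma> (dispatch_tm n) ((Arr (proj_ty n) ^^ Suc n) (proj_ty n))"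
proof -
  let ?ys = "map (\<lambda>j. apps (Var (n + (n - 1 - j))) (bound_vars n)) [0..<n]"
  let ?\<Gamma> = "replicate n ty.O @ replicate (Suc n) (proj_ty n) @ \<Gamma>"
  have var: "typing ?\<Gamma> (Var i) (proj_ty n)" if "n \<le> i" "i \<le> n + n" for i
    using that by (intro typing.var) (auto simp: nth_append simp del: replicate_Suc)
  have "typing ?\<Gamma> (apps (Var i) (bound_vars n)) ty.O" if "n \<le> i" "i \<le> n + n" for i
    using var[OF that] typing_bound_vars[where A = ty.O]
    by (intro typing_apps[where A = ty.O]) (auto simp: proj_ty_def)
  then have "typing ?\<Gamma> (apps (Var (n + n)) ?ys) ty.O"
    using var[of "n + n"] by (intro typing_apps[where A = ty.O]) (auto simp: proj_ty_def)
  then have "typing (replicate (Suc n) (proj_ty n) @ \<Gamma>) (lams n (apps (Var (n + n)) ?ys)) (proj_ty n)"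
    unfolding proj_ty_def by (rule typing_lams)
  then show ?thesis
    unfolding dispatch_tm_def by (rule typing_lams)
qed

lemma beta_eta_eq_step_tm:
  assumes "j < n" and "\<forall>i<n. s i < n"
  shows "App (step_tm n s) (proj_tm n j) =\<^sub>\<beta>\<^sub>\<eta> proj_tm n (s j)"
proof -
  let ?xs = "map (\<lambda>i. Var (n - 1 - s i)) [0..<n]"
  have "App (step_tm n s) (proj_tm n j)
      =\<^sub>\<beta>\<^sub>\<eta> psubst (subst_env (proj_tm n j) 0) (lams n (apps (Var n) ?xs))"
    unfolding step_tm_def by (rule beta_eta_eq_beta)
  also have "\<dots> = lams n (apps (proj_tm n j) ?xs)"
  proof -
    have "map (psubst ((up_subst ^^ n) (subst_env (proj_tm n j) 0))) ?xs = ?xs"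
      using assms by (auto simp: funpow_up_subst)
    then show ?thesis
      using \<open>j < n\<close> by (simp add: funpow_up_subst subst_env_def del: map_map)
  qed
  also have "\<dots> =\<^sub>\<beta>\<^sub>\<eta> lams n (psubst (args_env ?xs) (Var (n - 1 - j)))"
    using beta_eta_eq_apps_lams[of ?xs "Var (n - 1 - j)"] by (intro beta_eta_eq_lams) (simp add: proj_tm_def)
  also have "\<dots> = proj_tm n (s j)"
    using \<open>j < n\<close> by (simp add: args_env_def proj_tm_def)
  finally show ?thesis .
qed

lemma funpow_lessI: "j < n \<Longrightarrow> \<forall>i<n. s i < n \<Longrightarrow> (s ^^ m) j < n"
  by (induction m) auto

lemma beta_eta_eq_funpow_step_tm:
  assumes "j < n" and s: "\<forall>i<n. s i < n"
  shows "(App (step_tm n s) ^^ m) (proj_tm n j) =\<^sub>\<beta>\<^sub>\<eta> proj_tm n ((s ^^ m) j)"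
proof (induction m)
  case (Suc m)
  then have "(App (step_tm n s) ^^ Suc m) (proj_tm n j)
      =\<^sub>\<beta>\<^sub>\<eta> App (step_tm n s) (proj_tm n ((s ^^ m) j))"
    by (simp add: beta_eta_eq_App_right)
  also have "\<dots> =\<^sub>\<beta>\<^sub>\<eta> proj_tm n ((s ^^ Suc m) j)"
    using beta_eta_eq_step_tm[OF funpow_lessI[OF \<open>j < n\<close> s] s] by simp
  finally show ?case .
qed simp

lemma beta_eta_eq_dispatch_tm:
  assumes "r < n" and "length bs = n"
  shows "apps (dispatch_tm n) (proj_tm n r # bs) =\<^sub>\<beta>\<^sub>\<eta> bs ! r"
proof -
  let ?xs = "map (\<lambda>j. apps (rename (\<lambda>i. i + n) (bs ! j)) (bound_vars n)) [0..<n]"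
  let ?ys = "map (\<lambda>j. apps (Var (n + (n - 1 - j))) (bound_vars n)) [0..<n]"
  let ?\<sigma> = "(up_subst ^^ n) (args_env (proj_tm n r # bs))"
  have "apps (dispatch_tm n) (proj_tm n r # bs)
      = apps (lams (length (proj_tm n r # bs)) (lams n (apps (Var (n + n)) ?ys))) (proj_tm n r # bs)"
    using assms by (simp add: dispatch_tm_def)
  also have "\<dots> =\<^sub>\<beta>\<^sub>\<eta> psubst (args_env (proj_tm n r # bs)) (lams n (apps (Var (n + n)) ?ys))"
    by (rule beta_eta_eq_apps_lams)
  also have "\<dots> = lams n (apps (proj_tm n r) ?xs)"
  proof -
    have "map (psubst ?\<sigma>) (bound_vars n) = bound_vars n"
      by (auto simp: bound_vars_def funpow_up_subst)
    then have "map (psubst ?\<sigma>) ?ys = ?xs"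
      using assms by (auto simp: funpow_up_subst args_env_def)
    then show ?thesis
      using assms by (simp add: funpow_up_subst args_env_def del: map_map)
  qed
  also have "\<dots> =\<^sub>\<beta>\<^sub>\<eta> lams n (psubst (args_env ?xs) (Var (n - 1 - r)))"
    using beta_eta_eq_apps_lams[of ?xs "Var (n - 1 - r)"] by (intro beta_eta_eq_lams) (simp add: proj_tm_def)
  also have "\<dots> = lams n (apps (rename (\<lambda>i. i + n) (bs ! r)) (bound_vars n))"
    using \<open>r < n\<close> by (simp add: args_env_def)
  also have "\<dots> =\<^sub>\<beta>\<^sub>\<eta> bs ! r"
    by (rule beta_eta_eq_eta_lams)
  finally show ?thesis .
qed

text \<open>Under the binders \<open>f\<close> and \<open>x\<close> of the numeral, \<open>Var (Suc a - i)\<close> is the \<open>i\<close>-th of the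
  \<open>a\<close> arguments; the term is \<open>\<lambda>f x. dispatch (x\<^sub>0 step (proj 0)) (x\<^bsub>ch 0\<^esub> f x) \<dots>\<close>.\<close>
definition select_tm :: "nat \<Rightarrow> nat \<Rightarrow> (nat \<Rightarrow> nat) \<Rightarrow> (nat \<Rightarrow> nat) \<Rightarrow> tm" where
  "select_tm a n s ch = Lam (Lam (apps (dispatch_tm n)
     (App (App (Var (Suc a)) (step_tm n s)) (proj_tm n 0) #
      map (\<lambda>j. App (App (Var (Suc a - ch j)) (Var 1)) (Var 0)) [0..<n])))"

lemma typing_select_tm:
  assumes "0 < a" and "0 < n" and s: "\<forall>i<n. s i < n" and ch: "\<forall>j<n. ch j < a"
  shows "typing (replicate a (omega (proj_ty n))) (select_tm a n s ch) (omega (proj_ty n))"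
proof -
  let ?\<tau> = "proj_ty n"
  let ?\<Gamma> = "?\<tau> # Arr ?\<tau> ?\<tau> # replicate a (omega ?\<tau>)"
  have arg: "typing ?\<Gamma> (Var i) (omega ?\<tau>)" if "2 \<le> i" "i \<le> Suc a" for i
    using that \<open>0 < a\<close> by (intro typing.var) (auto simp: nth_Cons')
  have "typing ?\<Gamma> (App (App (Var i) (Var 1)) (Var 0)) ?\<tau>" if "2 \<le> i" "i \<le> Suc a" for i
    using arg[OF that]
    by (intro typing.app[where \<sigma> = ?\<tau>] typing.app[where \<sigma> = "Arr ?\<tau> ?\<tau>"])
      (auto simp: omega_def intro: typing.var)
  moreover have "typing ?\<Gamma> (App (App (Var (Suc a)) (step_tm n s)) (proj_tm n 0)) ?\<tau>"
    using arg[of "Suc a"] \<open>0 < a\<close> \<open>0 < n\<close> typing_step_tm[OF s] typing_proj_tm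
    by (intro typing.app) (auto simp: omega_def)
  ultimately show ?thesis
    using ch typing_dispatch_tm[of ?\<Gamma> n] unfolding select_tm_def omega_def
    by (intro typing.lam typing_apps[where A = ?\<tau>]) auto
qed

lemma beta_eta_eq_select_tm:
  assumes "0 < a" and "0 < n" and s: "\<forall>i<n. s i < n" and ch: "\<forall>j<n. ch j < a"
    and len: "length ns = a"
  shows "psubst (args_env (map church ns)) (select_tm a n s ch) =\<^sub>\<beta>\<^sub>\<eta> church (ns ! ch ((s ^^ (ns ! 0)) 0))"
proof -
  let ?r = "(s ^^ (ns ! 0)) 0"
  let ?\<sigma> = "up_subst (up_subst (args_env (map church ns)))"
  let ?p = "App (App (church (ns ! 0)) (step_tm n s)) (proj_tm n 0)"
  define cs where "cs = map (\<lambda>j. App (App (church (ns ! ch j)) (Var 1)) (Var 0)) [0..<n]"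
  have r: "?r < n"
    using funpow_lessI[OF \<open>0 < n\<close> s] .
  have \<sigma>: "?\<sigma> (Suc a - j) = church (ns ! j)" if "j < a" for j
  proof -
    have "Suc a - j = Suc (Suc (a - 1 - j))" and "a - 1 - (a - 1 - j) = j"
      using that by auto
    then show ?thesis
      using that len by (simp add: args_env_def)
  qed
  have "map (psubst ?\<sigma>) (map (\<lambda>j. App (App (Var (Suc a - ch j)) (Var 1)) (Var 0)) [0..<n]) = cs"
    using ch by (simp add: cs_def \<sigma>)
  then have subst_eq: "psubst (args_env (map church ns)) (select_tm a n s ch)
      = Lam (Lam (apps (dispatch_tm n) (?p # cs)))"
    using \<open>0 < a\<close> \<open>0 < n\<close> \<sigma>[of 0] by (simp add: select_tm_def del: map_map)
  have "?p =\<^sub>\<beta>\<^sub>\<eta> proj_tm n ?r"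
    using beta_eta_eq_church_App beta_eta_eq_funpow_step_tm[OF \<open>0 < n\<close> s]
    by (rule beta_eta_eq_trans)
  then have "apps (dispatch_tm n) (?p # cs) =\<^sub>\<beta>\<^sub>\<eta> apps (dispatch_tm n) (proj_tm n ?r # cs)"
    by (simp add: beta_eta_eq_apps_head beta_eta_eq_App_right)
  also have "\<dots> =\<^sub>\<beta>\<^sub>\<eta> cs ! ?r"
    using r by (intro beta_eta_eq_dispatch_tm) (auto simp: cs_def)
  also have "cs ! ?r =\<^sub>\<beta>\<^sub>\<eta> (App (Var 1) ^^ (ns ! ch ?r)) (Var 0)"
    using r by (simp add: cs_def beta_eta_eq_church_App)
  finally have "Lam (Lam (apps (dispatch_tm n) (?p # cs))) =\<^sub>\<beta>\<^sub>\<eta> church (ns ! ch ?r)"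
    by (rule beta_eta_eq_churchI)
  then show ?thesis
    unfolding subst_eq .
qed

lemma definable_at_orbit_select:
  assumes "0 < a" and "0 < n" and "\<forall>i<n. s i < n" and "\<forall>j<n. ch j < a"
  shows "definable_at (proj_ty n) a (\<lambda>ns. ns ! ch ((s ^^ (ns ! 0)) 0))"
  using assms by (intro definable_atI[where t = "select_tm a n s ch"] typing_select_tm beta_eta_eq_select_tm)

lemma definable_at_mod_select:
  assumes "2 \<le> l" and "l \<le> n"
  shows "definable_at (proj_ty n) (Suc l) (\<lambda>ns. ns ! (ns ! 0 mod l + 1))"
proof -
  have orbit: "((\<lambda>i. Suc i mod l) ^^ m) 0 = m mod l" for m
    by (induction m) (simp_all add: mod_Suc_eq)
  have "definable_at (proj_ty n) (Suc l) (\<lambda>ns. ns ! Suc (((\<lambda>i. Suc i mod l) ^^ (ns ! 0)) 0 mod l))"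
    using assms by (intro definable_at_orbit_select) (auto intro: less_le_trans[OF _ \<open>l \<le> n\<close>])
  then show ?thesis
    by (rule definable_at_cong) (simp add: orbit)
qed

lemma definable_at_threshold_select:
  assumes "l + 2 \<le> n"
  shows "definable_at (proj_ty n) 3 (\<lambda>ns. if ns ! 0 \<le> l then ns ! 1 else ns ! 2)"
proof -
  have orbit: "((\<lambda>i. Suc (min i l)) ^^ m) 0 = min m (Suc l)" for m
    by (induction m) auto
  have "definable_at (proj_ty n) 3
      (\<lambda>ns. ns ! (if ((\<lambda>i. Suc (min i l)) ^^ (ns ! 0)) 0 \<le> l then 1 else 2))"
    using assms by (intro definable_at_orbit_select) auto
  then show ?thesis
    by (rule definable_at_cong) (simp add: orbit)
qed

lemma classG_eventually_definable_at:
  "(k, f) \<in> classG \<Longrightarrow> \<forall>\<^sub>F n in sequentially. definable_at (proj_ty n) k f"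
proof (induction rule: classG.induct)
  case (poly k f)
  then show ?case
    by (simp add: ext_poly_definable_at)
next
  case (f1 l)
  show ?case
    by (intro eventually_sequentiallyI[of l]) (rule definable_at_mod_select[OF f1])
next
  case (f2 l)
  show ?case
    by (intro eventually_sequentiallyI[of "l + 2"]) (rule definable_at_threshold_select)
next
  case (comp hs g k)
  have "\<forall>\<^sub>F n in sequentially. \<forall>h\<in>set hs. definable_at (proj_ty n) k h"
    using comp.IH(2) by (intro eventually_ball_finite) auto
  with comp.IH(1) have "\<forall>\<^sub>F n in sequentially. definable_at (proj_ty n) (length hs) g \<and>
      (\<forall>h\<in>set hs. definable_at (proj_ty n) k h)"
    by (rule eventually_conj)
  then show ?case
    by (rule eventually_mono) (auto intro: definable_at_comp)
next
  case (ext k f g)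
  from ext.IH show ?case
    by (rule eventually_mono) (use ext.hyps(2) in \<open>auto intro: definable_at_cong\<close>)
qed

theorem corollary1:
  shows "\<forall>(k, f) \<in> classG. strictly_definable k f"
proof (intro ballI, clarify)
  fix k f
  assume "(k, f) \<in> classG"
  then have "\<exists>n. definable_at (proj_ty n) k f"
    using classG_eventually_definable_at eventually_happens' sequentially_bot by blast
  then show "strictly_definable k f"
    unfolding strictly_definable_iff by blast
qed

end
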